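(* Let $\mathcal{S}\subseteq\mathcal{L}$ and let $\mathcal{AF}_{\vdash}=(\vdash,\overline{\cdot},\mathsf{id})$ be contrapositable with $\vdash$ satisfying Cut. Then the stable extensions of $\mathcal{AF}_{\mathsf{con}}(\mathcal{S})$ coincide with its preferred extensions.
   Context: $\mathcal{L}$ is a set of formulas; ${\vdash}\subseteq\wp_{\sf fin}(\mathcal{L})\times\mathcal{L}$ is arbitrary and $\overline{\cdot}:\mathcal{L}\to\wp(\mathcal{L})$. $\mathit{Arg}_{\vdash'}(\mathcal{S})=\{(\Gamma,\gamma):\Gamma\subseteq\mathcal{S}\text{ finite},\Gamma\vdash'\gamma\}$; in $\mathcal{AF}_{\vdash'}(\mathcal{S})$, $(\Gamma,\gamma)$ attacks $(\Gamma',\gamma')$ iff $\gamma\in\overline{\lambda}$ for some $\lambda\in\Gamma'$. Complete = conflict-free, defends every member (every attacker of a member is attacked by a member), contains every argument it defends; preferred = $\subseteq$-maximal complete; stable = admissible (conflict-free and defends its members) and attacks every argument not in it. $\vdash^{+\phi}$ is the transitive closure of ${\vdash}\cup\{(\emptyset,\phi)\}$; Cut: for every $\phi$ and finite $\Gamma,\Delta$, if $\Gamma\vdash\phi$ and $\Delta\vdash^{+\phi}\gamma$ then $\Gamma\cup\Delta\vdash\gamma$. Contrapositable: for all finite $\Theta$, if $\Theta\vdash\gamma'$ with $\gamma'\in\overline{\gamma}$, then for every $\sigma\in\Theta$, $(\Theta\cup\{\gamma\})\setminus\{\sigma\}\vdash\sigma'$ for some $\sigma'\in\overline{\sigma}$.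 $\Theta\subseteq\mathcal{S}$ is $\mathcal{AF}_{\vdash}(\mathcal{S})$-inconsistent iff there are $\Theta'\subseteq\Theta$ and $\gamma\in\Theta'$ with $\Theta'\setminus\{\gamma\}\vdash\gamma'$ for some $\gamma'\in\overline{\gamma}$, consistent otherwise. $\vdash_{\mathsf{con}}=\{(\Gamma,\gamma):\Gamma\vdash\gamma,\ \Gamma\text{ consistent}\}$ and $\mathcal{AF}_{\mathsf{con}}(\mathcal{S})=\mathcal{AF}_{\vdash_{\mathsf{con}}}(\mathcal{S})$. *)

theory Defs
  imports Main
begin

(* A derivability relation  |- \<subseteq> \<wp>_fin(L) \<times> L  is modelled as a predicate
   vd :: 'f set \<Rightarrow> 'f \<Rightarrow> bool, only ever consulted on finite premise sets. *)

type_synonym 'f drel = "'f set \<Rightarrow> 'f \<Rightarrow> bool"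
type_synonym 'f arg = "'f set \<times> 'f"

definition Arg :: "'f drel \<Rightarrow> 'f set \<Rightarrow> 'f arg set" where
  "Arg vd S = {(\<Gamma>, \<gamma>). finite \<Gamma> \<and> \<Gamma> \<subseteq> S \<and> vd \<Gamma> \<gamma>}"

definition attacks :: "('f \<Rightarrow> 'f set) \<Rightarrow> 'f arg \<Rightarrow> 'f arg \<Rightarrow> bool" where
  "attacks contr a b \<longleftrightarrow> (\<exists>l\<in>fst b. snd a \<in> contr l)"

definition conflict_free :: "'a set \<Rightarrow> ('a \<Rightarrow> 'a \<Rightarrow> bool) \<Rightarrow> 'a set \<Rightarrow> bool" where
  "conflict_free A att E \<longleftrightarrow> E \<subseteq> A \<and> (\<forall>a\<in>E. \<forall>b\<in>E. \<not> att a b)"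

definition defends :: "'a set \<Rightarrow> ('a \<Rightarrow> 'a \<Rightarrow> bool) \<Rightarrow> 'a set \<Rightarrow> 'a \<Rightarrow> bool" where
  "defends A att E a \<longleftrightarrow> (\<forall>b\<in>A. att b a \<longrightarrow> (\<exists>c\<in>E. att c b))"

definition admissible :: "'a set \<Rightarrow> ('a \<Rightarrow> 'a \<Rightarrow> bool) \<Rightarrow> 'a set \<Rightarrow> bool" where
  "admissible A att E \<longleftrightarrow> conflict_free A att E \<and> (\<forall>a\<in>E. defends A att E a)"

definition complete_ext :: "'a set \<Rightarrow> ('a \<Rightarrow> 'a \<Rightarrow> bool) \<Rightarrow> 'a set \<Rightarrow> bool" where
  "complete_ext A att E \<longleftrightarrow> admissible A att E \<and> (\<forall>a\<in>A. defends A att E a \<longrightarrow> a \<in> E)"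

definition preferred_ext :: "'a set \<Rightarrow> ('a \<Rightarrow> 'a \<Rightarrow> bool) \<Rightarrow> 'a set \<Rightarrow> bool" where
  "preferred_ext A att E \<longleftrightarrow> complete_ext A att E \<and>
     (\<forall>E'. complete_ext A att E' \<and> E \<subseteq> E' \<longrightarrow> E' = E)"

definition stable_ext :: "'a set \<Rightarrow> ('a \<Rightarrow> 'a \<Rightarrow> bool) \<Rightarrow> 'a set \<Rightarrow> bool" where
  "stable_ext A att E \<longleftrightarrow> admissible A att E \<and> (\<forall>b\<in>A - E. \<exists>a\<in>E. att a b)"

inductive plus_drel :: "'f drel \<Rightarrow> 'f \<Rightarrow> 'f set \<Rightarrow> 'f \<Rightarrow> bool" for vd \<phi> where
  base: "finite \<Gamma> \<Longrightarrow> vd \<Gamma> \<gamma> \<Longrightarrow> plus_drel vd \<phi> \<Gamma> \<gamma>"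
| ax: "plus_drel vd \<phi> {} \<phi>"
| trans: "plus_drel vd \<phi> \<Gamma> \<delta> \<Longrightarrow> plus_drel vd \<phi> \<Delta> \<gamma> \<Longrightarrow> \<delta> \<in> \<Delta> \<Longrightarrow>
          plus_drel vd \<phi> (\<Gamma> \<union> (\<Delta> - {\<delta>})) \<gamma>"

definition cut_prop :: "'f drel \<Rightarrow> bool" where
  "cut_prop vd \<longleftrightarrow> (\<forall>\<phi> \<Gamma> \<Delta> \<gamma>. finite \<Gamma> \<and> finite \<Delta> \<and> vd \<Gamma> \<phi> \<and> plus_drel vd \<phi> \<Delta> \<gamma>
      \<longrightarrow> vd (\<Gamma> \<union> \<Delta>) \<gamma>)"

definition contrapositable :: "'f drel \<Rightarrow> ('f \<Rightarrow> 'f set) \<Rightarrow> bool" where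
  "contrapositable vd contr \<longleftrightarrow> (\<forall>\<Theta> \<gamma> \<gamma>'. finite \<Theta> \<and> vd \<Theta> \<gamma>' \<and> \<gamma>' \<in> contr \<gamma> \<longrightarrow>
      (\<forall>\<sigma>\<in>\<Theta>. \<exists>\<sigma>'\<in>contr \<sigma>. vd ((\<Theta> \<union> {\<gamma>}) - {\<sigma>}) \<sigma>'))"

definition inconsistent :: "'f drel \<Rightarrow> ('f \<Rightarrow> 'f set) \<Rightarrow> 'f set \<Rightarrow> bool" where
  "inconsistent vd contr \<Theta> \<longleftrightarrow> (\<exists>\<Theta>' \<gamma>. \<Theta>' \<subseteq> \<Theta> \<and> finite \<Theta>' \<and> \<gamma> \<in> \<Theta>' \<and>
      (\<exists>\<gamma>'\<in>contr \<gamma>. vd (\<Theta>' - {\<gamma>}) \<gamma>'))"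

definition vd_con :: "'f drel \<Rightarrow> ('f \<Rightarrow> 'f set) \<Rightarrow> 'f drel" where
  "vd_con vd contr \<Gamma> \<gamma> \<longleftrightarrow> vd \<Gamma> \<gamma> \<and> \<not> inconsistent vd contr \<Gamma>"

end

theory Submission
  imports Defs
begin

(* Every stable extension is preferred. Conversely, the premises of an admissible extension E are
   consistent: for a minimal inconsistent set \<Theta> with culprit g, the argument (\<Theta> - {g}, g') attacks
   E, and any counter-attack from E hits a premise of E itself. By Zorn's lemma these premises extend
   to a maximal consistent T \<subseteq> S. Contraposition makes the arguments over T conflict-free, and
   maximality lets them attack every argument with a premise outside T; so they form a stable, hence
   complete, extension containing E, which equals E when E is preferred. *)

lemma stable_imp_complete:
  assumes "stable_ext A att E"
  shows "complete_ext A att E"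
  using assms unfolding stable_ext_def complete_ext_def admissible_def conflict_free_def defends_def
  by blast

lemma stable_imp_preferred:
  assumes stable: "stable_ext A att E"
  shows "preferred_ext A att E"
  unfolding preferred_ext_def
proof (intro conjI allI impI)
  show "complete_ext A att E" using stable by (rule stable_imp_complete)
next
  fix E' assume E': "complete_ext A att E' \<and> E \<subseteq> E'"
  hence "E' \<subseteq> A" and "\<forall>a\<in>E'. \<forall>b\<in>E'. \<not> att a b"
    unfolding complete_ext_def admissible_def conflict_free_def by blast+
  moreover have "\<forall>b\<in>A - E. \<exists>a\<in>E. att a b" using stable unfolding stable_ext_def by blast
  ultimately show "E' = E" using E' by blast
qed

lemma conflict_free_attacking_outside_imp_stable:
  assumes "conflict_free A att E" and "\<forall>b\<in>A - E. \<exists>a\<in>E. att a b"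
  shows "stable_ext A att E"
  using assms unfolding stable_ext_def admissible_def conflict_free_def defends_def by blast

lemma Arg_mono: "T \<subseteq> S \<Longrightarrow> Arg vd T \<subseteq> Arg vd S"
  unfolding Arg_def by auto

lemma Arg_fst_subset: "a \<in> Arg vd S \<Longrightarrow> fst a \<subseteq> S"
  unfolding Arg_def by auto

lemma Arg_restrict: "a \<in> Arg vd S \<Longrightarrow> fst a \<subseteq> T \<Longrightarrow> a \<in> Arg vd T"
  unfolding Arg_def by auto

lemma Arg_vd_conI:
  "finite \<Gamma> \<Longrightarrow> \<Gamma> \<subseteq> S \<Longrightarrow> vd \<Gamma> \<gamma> \<Longrightarrow> \<not> inconsistent vd contr \<Gamma>
   \<Longrightarrow> (\<Gamma>, \<gamma>) \<in> Arg (vd_con vd contr) S"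
  unfolding Arg_def vd_con_def by simp

lemma inconsistentI:
  "\<Theta> \<subseteq> T \<Longrightarrow> finite \<Theta> \<Longrightarrow> g \<in> \<Theta> \<Longrightarrow> g' \<in> contr g \<Longrightarrow> vd (\<Theta> - {g}) g'
   \<Longrightarrow> inconsistent vd contr T"
  unfolding inconsistent_def by blast

lemma inconsistent_mono: "inconsistent vd contr A \<Longrightarrow> A \<subseteq> B \<Longrightarrow> inconsistent vd contr B"
  unfolding inconsistent_def by blast

lemma inconsistent_minimal_witness:
  assumes "inconsistent vd contr T"
  obtains \<Theta> g g' where "\<Theta> \<subseteq> T" "finite \<Theta>" "g \<in> \<Theta>" "g' \<in> contr g" "vd (\<Theta> - {g}) g'"
    "\<not> inconsistent vd contr (\<Theta> - {g})"
proof -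
  from assms obtain \<Theta>0 g0 g0' where \<Theta>0: "\<Theta>0 \<subseteq> T" "finite \<Theta>0" "g0 \<in> \<Theta>0" "g0' \<in> contr g0"
    "vd (\<Theta>0 - {g0}) g0'"
    unfolding inconsistent_def by blast
  have "\<exists>\<Theta> g g'. \<Theta> \<subseteq> \<Theta>0 \<and> finite \<Theta> \<and> g \<in> \<Theta> \<and> g' \<in> contr g \<and> vd (\<Theta> - {g}) g'
          \<and> \<not> inconsistent vd contr (\<Theta> - {g})"
    using \<Theta>0(2-5)
  proof (induction \<Theta>0 arbitrary: g0 g0' rule: finite_psubset_induct)
    case (psubset \<Theta>0)
    show ?case
    proof (cases "inconsistent vd contr (\<Theta>0 - {g0})")
      case False
      with psubset show ?thesis by blast
    next
      case True
      then obtain \<Theta>1 g1 g1' where \<Theta>1: "\<Theta>1 \<subseteq> \<Theta>0 - {g0}" "g1 \<in> \<Theta>1" "g1' \<in> contr g1"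
        "vd (\<Theta>1 - {g1}) g1'"
        unfolding inconsistent_def by blast
      with psubset.prems(1) have "\<Theta>1 \<subset> \<Theta>0" by blast
      from psubset.IH[OF this \<Theta>1(2-4)] obtain \<Theta> g g' where "\<Theta> \<subseteq> \<Theta>1" "finite \<Theta>" "g \<in> \<Theta>"
        "g' \<in> contr g" "vd (\<Theta> - {g}) g'" "\<not> inconsistent vd contr (\<Theta> - {g})"
        by blast
      with \<open>\<Theta>1 \<subset> \<Theta>0\<close> show ?thesis by blast
    qed
  qed
  with \<Theta>0(1) that show thesis by blast
qed

lemma contrapositableD:
  assumes "contrapositable vd contr" "finite \<Theta>" "vd \<Theta> \<gamma>'" "\<gamma>' \<in> contr \<gamma>" "\<sigma> \<in> \<Theta>"
  obtains \<sigma>' where "\<sigma>' \<in> contr \<sigma>" "vd (insert \<gamma> \<Theta> - {\<sigma>}) \<sigma>'"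
proof -
  from assms have "\<exists>\<sigma>'\<in>contr \<sigma>. vd ((\<Theta> \<union> {\<gamma>}) - {\<sigma>}) \<sigma>'"
    unfolding contrapositable_def by blast
  then show thesis using that by auto
qed

lemma contrapositable_move_culprit:
  assumes "contrapositable vd contr" "finite \<Theta>" "g \<in> \<Theta>" "g' \<in> contr g" "vd (\<Theta> - {g}) g'"
    and "\<sigma> \<in> \<Theta>"
  obtains \<sigma>' where "\<sigma>' \<in> contr \<sigma>" "vd (\<Theta> - {\<sigma>}) \<sigma>'"
proof (cases "\<sigma> = g")
  case False
  have "finite (\<Theta> - {g})" "\<sigma> \<in> \<Theta> - {g}" using assms(2,6) False by auto
  then obtain \<sigma>' where "\<sigma>' \<in> contr \<sigma>" "vd (insert g (\<Theta> - {g}) - {\<sigma>}) \<sigma>'"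
    using contrapositableD[OF assms(1) _ assms(5,4)] by metis
  moreover have "insert g (\<Theta> - {g}) = \<Theta>" using \<open>g \<in> \<Theta>\<close> by blast
  ultimately show thesis using that by simp
qed (use assms that in blast)

lemma derives_contrary_imp_inconsistent:
  assumes "contrapositable vd contr" "finite \<Theta>" "vd \<Theta> \<delta>" "\<delta> \<in> contr l"
  shows "inconsistent vd contr (insert l \<Theta>)"
proof (cases "l \<in> \<Theta>")
  case True
  then obtain l' where "l' \<in> contr l" "vd (insert l \<Theta> - {l}) l'"
    using contrapositableD[OF assms] by metis
  with True assms(2) show ?thesis by (intro inconsistentI[of \<Theta> _ l l']) auto
next
  case False
  with assms show ?thesis by (intro inconsistentI[of "insert l \<Theta>" _ l \<delta>]) auto
qed

lemma admissible_premises_consistent: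
  assumes adm: "admissible (Arg (vd_con vd contr) S) (attacks contr) E"
  shows "\<not> inconsistent vd contr (\<Union>(fst ` E))"
proof
  let ?A = "Arg (vd_con vd contr) S"
  assume "inconsistent vd contr (\<Union>(fst ` E))"
  then obtain \<Theta> g g' where \<Theta>: "\<Theta> \<subseteq> \<Union>(fst ` E)" "finite \<Theta>" "g \<in> \<Theta>" "g' \<in> contr g"
    "vd (\<Theta> - {g}) g'" "\<not> inconsistent vd contr (\<Theta> - {g})"
    by (rule inconsistent_minimal_witness)
  have "E \<subseteq> ?A" using adm unfolding admissible_def conflict_free_def by blast
  hence "\<Union>(fst ` E) \<subseteq> S" by (blast dest: Arg_fst_subset)
  with \<Theta> have b: "(\<Theta> - {g}, g') \<in> ?A" by (intro Arg_vd_conI) auto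
  from \<Theta> obtain e where e: "e \<in> E" "g \<in> fst e" by blast
  hence "attacks contr (\<Theta> - {g}, g') e" using \<Theta>(4) unfolding attacks_def by auto
  with adm e b obtain c where c: "c \<in> E" "attacks contr c (\<Theta> - {g}, g')"
    unfolding admissible_def defends_def by blast
  then obtain l where "l \<in> \<Theta> - {g}" "snd c \<in> contr l" unfolding attacks_def by auto
  with \<Theta>(1) obtain e' where "e' \<in> E" "attacks contr c e'" unfolding attacks_def by blast
  with c adm show False unfolding admissible_def conflict_free_def by blast
qed

definition maximal_consistent :: "'f drel \<Rightarrow> ('f \<Rightarrow> 'f set) \<Rightarrow> 'f set \<Rightarrow> 'f set \<Rightarrow> bool" where
  "maximal_consistent vd contr S T \<longleftrightarrow> T \<subseteq> S \<and> \<not> inconsistent vd contr T \<and>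
     (\<forall>T'. T \<subseteq> T' \<and> T' \<subseteq> S \<and> \<not> inconsistent vd contr T' \<longrightarrow> T' = T)"

lemma inconsistent_Union_chain:
  assumes "inconsistent vd contr (\<Union>C)" "C \<noteq> {}" "subset.chain A C"
  obtains T where "T \<in> C" "inconsistent vd contr T"
proof -
  from assms(1) obtain \<Theta> g g' where "\<Theta> \<subseteq> \<Union>C" "finite \<Theta>" "g \<in> \<Theta>" "g' \<in> contr g"
    "vd (\<Theta> - {g}) g'"
    unfolding inconsistent_def by blast
  moreover from this assms(2,3) obtain T where "T \<in> C" "\<Theta> \<subseteq> T"
    by (blast intro: finite_subset_Union_chain)
  ultimately show thesis using that inconsistentI by metis
qed

lemma consistent_extends_to_maximal:
  assumes "P \<subseteq> S" "\<not> inconsistent vd contr P"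
  obtains T where "P \<subseteq> T" "maximal_consistent vd contr S T"
proof -
  let ?C = "{T. P \<subseteq> T \<and> T \<subseteq> S \<and> \<not> inconsistent vd contr T}"
  have "\<exists>M\<in>?C. \<forall>X\<in>?C. M \<subseteq> X \<longrightarrow> X = M"
  proof (rule subset_Zorn_nonempty)
    show "?C \<noteq> {}" using assms by blast
  next
    fix K assume K: "K \<noteq> {}" "subset.chain ?C K"
    hence KC: "K \<subseteq> ?C" unfolding subset.chain_def by blast
    have "\<not> inconsistent vd contr (\<Union>K)"
    proof
      assume "inconsistent vd contr (\<Union>K)"
      with K obtain T where "T \<in> K" "inconsistent vd contr T" by (elim inconsistent_Union_chain)
      with KC show False by blast
    qed
    moreover have "P \<subseteq> \<Union>K" using K(1) KC by blast
    moreover have "\<Union>K \<subseteq> S" using KC by blast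
    ultimately show "\<Union>K \<in> ?C" by blast
  qed
  then obtain M where "M \<in> ?C" and "\<forall>X\<in>?C. M \<subseteq> X \<longrightarrow> X = M" by blast
  hence "P \<subseteq> M" "maximal_consistent vd contr S M"
    unfolding maximal_consistent_def by auto
  with that show thesis by blast
qed

lemma Arg_consistent_conflict_free:
  assumes "contrapositable vd contr" "T \<subseteq> S" "\<not> inconsistent vd contr T"
  shows "conflict_free (Arg (vd_con vd contr) S) (attacks contr) (Arg (vd_con vd contr) T)"
  unfolding conflict_free_def
proof (intro conjI ballI notI)
  show "Arg (vd_con vd contr) T \<subseteq> Arg (vd_con vd contr) S" using assms(2) by (rule Arg_mono)
next
  fix a b assume a: "a \<in> Arg (vd_con vd contr) T" and b: "b \<in> Arg (vd_con vd contr) T"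
    and "attacks contr a b"
  then obtain l where l: "l \<in> fst b" "snd a \<in> contr l" unfolding attacks_def by blast
  have "finite (fst a)" "vd (fst a) (snd a)" "insert l (fst a) \<subseteq> T"
    using a b l unfolding Arg_def vd_con_def by auto
  with assms(1,3) l(2) show False
    using derives_contrary_imp_inconsistent inconsistent_mono by metis
qed

lemma maximal_consistent_refutes_outside:
  assumes "contrapositable vd contr" "maximal_consistent vd contr S T" "l \<in> S - T"
  obtains \<Theta> l' where "finite \<Theta>" "\<Theta> \<subseteq> T" "l' \<in> contr l" "vd \<Theta> l'"
proof -
  from assms(2,3) have "inconsistent vd contr (insert l T)" and cons: "\<not> inconsistent vd contr T"
    unfolding maximal_consistent_def by blast+
  then obtain \<Theta> g g' where \<Theta>: "\<Theta> \<subseteq> insert l T" "finite \<Theta>" "g \<in> \<Theta>" "g' \<in> contr g"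
    "vd (\<Theta> - {g}) g'"
    unfolding inconsistent_def by blast
  have "l \<in> \<Theta>"
  proof (rule ccontr)
    assume "l \<notin> \<Theta>"
    with \<Theta> cons show False using inconsistentI[of \<Theta> T] by blast
  qed
  with assms(1) \<Theta>(2-5) obtain l' where "l' \<in> contr l" "vd (\<Theta> - {l}) l'"
    by (rule contrapositable_move_culprit)
  with \<Theta>(1,2) that show thesis by blast
qed

lemma maximal_consistent_Arg_stable:
  assumes contrapos: "contrapositable vd contr" and max: "maximal_consistent vd contr S T"
  shows "stable_ext (Arg (vd_con vd contr) S) (attacks contr) (Arg (vd_con vd contr) T)"
proof (rule conflict_free_attacking_outside_imp_stable)
  have TS: "T \<subseteq> S" and cons: "\<not> inconsistent vd contr T"
    using max unfolding maximal_consistent_def by blast+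
  then show "conflict_free (Arg (vd_con vd contr) S) (attacks contr) (Arg (vd_con vd contr) T)"
    using contrapos by (intro Arg_consistent_conflict_free)
  show "\<forall>b\<in>Arg (vd_con vd contr) S - Arg (vd_con vd contr) T.
          \<exists>a\<in>Arg (vd_con vd contr) T. attacks contr a b"
  proof
    fix b assume b: "b \<in> Arg (vd_con vd contr) S - Arg (vd_con vd contr) T"
    hence "\<not> fst b \<subseteq> T" and "fst b \<subseteq> S" using Arg_restrict Arg_fst_subset by blast+
    then obtain l where l: "l \<in> fst b" "l \<in> S - T" by blast
    from contrapos max l(2) obtain \<Theta> l' where \<Theta>: "finite \<Theta>" "\<Theta> \<subseteq> T" "l' \<in> contr l" "vd \<Theta> l'"
      by (rule maximal_consistent_refutes_outside)
    have "\<not> inconsistent vd contr \<Theta>" using cons \<Theta>(2) inconsistent_mono by blast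
    with \<Theta> have "(\<Theta>, l') \<in> Arg (vd_con vd contr) T" by (intro Arg_vd_conI)
    moreover have "attacks contr (\<Theta>, l') b" using l \<Theta> unfolding attacks_def by auto
    ultimately show "\<exists>a\<in>Arg (vd_con vd contr) T. attacks contr a b" by blast
  qed
qed

theorem corollary2:
  fixes vd :: "'f set \<Rightarrow> 'f \<Rightarrow> bool" and contr :: "'f \<Rightarrow> 'f set" and S :: "'f set"
  assumes "contrapositable vd contr" and "cut_prop vd"
  shows "{E. stable_ext (Arg (vd_con vd contr) S) (attacks contr) E}
       = {E. preferred_ext (Arg (vd_con vd contr) S) (attacks contr) E}"
proof (intro equalityI subsetI; simp)
  fix E assume "stable_ext (Arg (vd_con vd contr) S) (attacks contr) E"
  thus "preferred_ext (Arg (vd_con vd contr) S) (attacks contr) E" by (rule stable_imp_preferred)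
next
  let ?A = "Arg (vd_con vd contr) S"
  fix E assume pref: "preferred_ext ?A (attacks contr) E"
  hence adm: "admissible ?A (attacks contr) E"
    unfolding preferred_ext_def complete_ext_def by blast
  hence EA: "E \<subseteq> ?A" unfolding admissible_def conflict_free_def by blast
  have "\<Union>(fst ` E) \<subseteq> S" using EA by (blast dest: Arg_fst_subset)
  from this admissible_premises_consistent[OF adm] obtain T
    where "\<Union>(fst ` E) \<subseteq> T" and max: "maximal_consistent vd contr S T"
    by (rule consistent_extends_to_maximal)
  hence sub: "E \<subseteq> Arg (vd_con vd contr) T" using EA by (blast intro: Arg_restrict)
  have stable: "stable_ext ?A (attacks contr) (Arg (vd_con vd contr) T)"
    using assms(1) max by (rule maximal_consistent_Arg_stable)
  hence "complete_ext ?A (attacks contr) (Arg (vd_con vd contr) T)" by (rule stable_imp_complete)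
  with pref sub have "Arg (vd_con vd contr) T = E" unfolding preferred_ext_def by blast
  with stable show "stable_ext ?A (attacks contr) E" by simp
qed

end
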